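(* Let $W_t:\Omega\to(0,\infty)$, $t\in\mathbb{N}$, be random variables on a probability space, and suppose there is $\gamma_0<0$ such that $E[W_t^\gamma]<\infty$ for all $t\in\mathbb{N}$ and all $\gamma\in(\gamma_0,0)$. Let $$C:=\lim_{\gamma\to0^-}\liminf_{t\to\infty}\frac{1}{t}\,\frac{1}{\gamma}\log\big(E[W_t^\gamma]\big)$$ (the limit exists in $[-\infty,+\infty]$). Then $\liminf_{t\to\infty}\frac{1}{t}\log W_t\geq C$ almost surely. Moreover, if $C>0$, then the hitting times $T_b:=\inf\{t\in\mathbb{N}: W_t>b\}$, $b\in[0,\infty)$, are integrable and $$\limsup_{b\to+\infty}\frac{E[T_b]}{\log b}\leq\frac{1}{C}.$$
   Context: $\log$ is the natural logarithm; if $C=+\infty$ then $1/C:=0$. *)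

theory Defs
  imports "HOL-Probability.Probability"
begin

text \<open>Hitting time T_b = inf {t. W_t > b}, with inf of the empty set = +infinity
  (realised as the top element of ennreal).\<close>
definition hitting_time :: "(nat \<Rightarrow> 'a \<Rightarrow> real) \<Rightarrow> real \<Rightarrow> 'a \<Rightarrow> ennreal" where
  "hitting_time W b \<omega> = (INF t \<in> {t. W t \<omega> > b}. ennreal (real t))"

definition moment_rate :: "'a measure \<Rightarrow> (nat \<Rightarrow> 'a \<Rightarrow> real) \<Rightarrow> real \<Rightarrow> ereal" where
  "moment_rate M W \<gamma> =
     liminf (\<lambda>t. ereal (1 / real t * (1 / \<gamma>) * ln (integral\<^sup>L M (\<lambda>\<omega>. W t \<omega> powr \<gamma>))))"

end

theory Submission
  imports Defs
begin

text \<open>For \<open>\<gamma> < 0\<close>, Jensen's inequality for \<open>x \<mapsto> x powr (\<gamma>\<^sub>1 / \<gamma>\<^sub>2)\<close> makes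
  \<open>ln E[X powr \<gamma>] / \<gamma>\<close> nondecreasing in \<open>\<gamma>\<close>, so \<open>C\<close> exists and is the supremum of the moment
  rates. If \<open>c < C\<close>, some \<open>\<gamma> < 0\<close> has \<open>E[W t powr \<gamma>] \<le> exp (\<gamma> c t)\<close> for large \<open>t\<close>, and Markov's
  inequality for \<open>W t powr \<gamma>\<close> gives \<open>P(W t \<le> x) \<le> exp (\<gamma> (c t - ln x))\<close>. For \<open>x = exp (c' t)\<close>
  with \<open>c' < c\<close> these probabilities are summable, so by Borel--Cantelli
  \<open>liminf (ln W t) / t \<ge> c'\<close> almost surely. For the hitting times, \<open>E[T b] \<le> \<Sum>t. P(W t \<le> b)\<close>, and
  the same bound makes this sum at most \<open>ln b / c + O(1)\<close>.\<close>

lemma (in prob_space) integral_pos_of_pos: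
  fixes f :: "'a \<Rightarrow> real"
  assumes "integrable M f" and "\<And>\<omega>. \<omega> \<in> space M \<Longrightarrow> f \<omega> > 0"
  shows "integral\<^sup>L M f > 0"
  using integral_less_AE_space[of "\<lambda>_. 0" f] assms by (simp add: emeasure_space_1)

lemma (in prob_space) ln_neg_moment_div_mono:
  fixes X :: "'a \<Rightarrow> real"
  assumes pos: "\<And>\<omega>. \<omega> \<in> space M \<Longrightarrow> X \<omega> > 0" and \<gamma>: "\<gamma>\<^sub>1 < \<gamma>\<^sub>2" "\<gamma>\<^sub>2 < 0"
    and int1: "integrable M (\<lambda>\<omega>. X \<omega> powr \<gamma>\<^sub>1)" and int2: "integrable M (\<lambda>\<omega>. X \<omega> powr \<gamma>\<^sub>2)"
  shows "ln (expectation (\<lambda>\<omega>. X \<omega> powr \<gamma>\<^sub>1)) / \<gamma>\<^sub>1 \<le> ln (expectation (\<lambda>\<omega>. X \<omega> powr \<gamma>\<^sub>2)) / \<gamma>\<^sub>2"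
proof -
  define p where "p = \<gamma>\<^sub>1 / \<gamma>\<^sub>2"
  define m\<^sub>1 where "m\<^sub>1 = expectation (\<lambda>\<omega>. X \<omega> powr \<gamma>\<^sub>1)"
  define m\<^sub>2 where "m\<^sub>2 = expectation (\<lambda>\<omega>. X \<omega> powr \<gamma>\<^sub>2)"
  have "p \<ge> 1"
    using \<gamma> by (simp add: p_def)
  have X_ne_0: "X \<omega> \<noteq> 0" if "\<omega> \<in> space M" for \<omega>
    using pos[OF that] by simp
  have m_pos: "m\<^sub>1 > 0" "m\<^sub>2 > 0"
    unfolding m\<^sub>1_def m\<^sub>2_def by (intro integral_pos_of_pos int1 int2; simp add: X_ne_0)+
  have powr_p: "(X \<omega> powr \<gamma>\<^sub>2) powr p = X \<omega> powr \<gamma>\<^sub>1" for \<omega>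
    using \<gamma> by (simp add: powr_powr p_def)
  have "m\<^sub>2 powr p \<le> expectation (\<lambda>\<omega>. (X \<omega> powr \<gamma>\<^sub>2) powr p)"
    unfolding m\<^sub>2_def
  proof (rule jensens_inequality[where I="{0<..}" and a=0])
    show "AE \<omega> in M. X \<omega> powr \<gamma>\<^sub>2 \<in> {0<..}"
      by (intro AE_I2) (simp add: X_ne_0)
    show "integrable M (\<lambda>\<omega>. (X \<omega> powr \<gamma>\<^sub>2) powr p)"
      using int1 by (simp add: powr_p)
    show "convex_on {0<..} (\<lambda>x. x powr p)"
      using \<open>p \<ge> 1\<close> by (rule powr_convex)
  qed (use int2 in simp_all)
  also have "\<dots> = m\<^sub>1"
    by (simp add: powr_p m\<^sub>1_def)
  finally have "ln (m\<^sub>2 powr p) \<le> ln m\<^sub>1"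
    using m_pos by (subst ln_le_cancel_iff) auto
  then have "p * ln m\<^sub>2 \<le> ln m\<^sub>1"
    using m_pos by simp
  then have "ln m\<^sub>1 / \<gamma>\<^sub>1 \<le> p * ln m\<^sub>2 / \<gamma>\<^sub>1"
    using \<gamma> by (intro divide_right_mono_neg) auto
  also have "\<dots> = ln m\<^sub>2 / \<gamma>\<^sub>2"
    using \<gamma> by (simp add: p_def)
  finally show ?thesis
    unfolding m\<^sub>1_def m\<^sub>2_def .
qed

lemma (in prob_space) prob_le_neg_moment:
  fixes X :: "'a \<Rightarrow> real"
  assumes [measurable]: "X \<in> borel_measurable M"
    and "\<And>\<omega>. \<omega> \<in> space M \<Longrightarrow> X \<omega> > 0" and "\<gamma> < 0" "x > 0"
    and "integrable M (\<lambda>\<omega>. X \<omega> powr \<gamma>)"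
  shows "prob {\<omega> \<in> space M. X \<omega> \<le> x} \<le> expectation (\<lambda>\<omega>. X \<omega> powr \<gamma>) / x powr \<gamma>"
proof -
  have "prob {\<omega> \<in> space M. X \<omega> \<le> x} \<le> prob {\<omega> \<in> space M. x powr \<gamma> \<le> X \<omega> powr \<gamma>}"
    using assms by (intro finite_measure_mono) (auto intro: powr_mono2')
  also have "\<dots> \<le> expectation (\<lambda>\<omega>. X \<omega> powr \<gamma>) / x powr \<gamma>"
    using assms by (intro integral_Markov_inequality_measure[where A="space M"]) auto
  finally show ?thesis .
qed

lemma hitting_time_eq_INF:
  "hitting_time W b \<omega> = (INF t. if b < W t \<omega> then ennreal (real t) else top)"
  unfolding hitting_time_def
proof (rule antisym)
  show "(INF t\<in>{t. b < W t \<omega>}. ennreal (real t)) \<le> (INF t. if b < W t \<omega> then ennreal (real t) else top)"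
    by (rule INF_greatest) (auto intro: INF_lower)
  show "(INF t. if b < W t \<omega> then ennreal (real t) else top) \<le> (INF t\<in>{t. b < W t \<omega>}. ennreal (real t))"
  proof (rule INF_greatest)
    fix t assume "t \<in> {t. b < W t \<omega>}"
    then show "(INF t. if b < W t \<omega> then ennreal (real t) else top) \<le> ennreal (real t)"
      by (intro INF_lower2[where i=t]) auto
  qed
qed

lemma hitting_time_measurable[measurable]:
  assumes [measurable]: "\<And>t. W t \<in> borel_measurable M"
  shows "hitting_time W b \<in> borel_measurable M"
  unfolding hitting_time_eq_INF[abs_def] by measurable

lemma hitting_time_le_suminf:
  "hitting_time W b \<omega> \<le> (\<Sum>t. if W t \<omega> \<le> b then 1 else 0)"
proof -
  let ?S = "\<Sum>t. if W t \<omega> \<le> b then 1 else (0 :: ennreal)"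
  have below: "of_nat n \<le> ?S" if "\<forall>t<n. W t \<omega> \<le> b" for n
  proof -
    have "of_nat n = (\<Sum>t<n. if W t \<omega> \<le> b then 1 else (0 :: ennreal))"
      using that by simp
    also have "\<dots> \<le> ?S"
      by (rule sum_le_suminf) auto
    finally show ?thesis .
  qed
  show ?thesis
  proof (cases "\<exists>t. b < W t \<omega>")
    case False
    then have "?S = top"
      using below ennreal_Ex_less_of_nat[of ?S] by (metis leD not_less top.not_eq_extremum)
    then show ?thesis
      by simp
  next
    case True
    define n where "n = (LEAST t. b < W t \<omega>)"
    have "b < W n \<omega>"
      unfolding n_def using True by (rule LeastI_ex)
    then have "hitting_time W b \<omega> \<le> of_nat n"
      unfolding hitting_time_def by (auto intro: INF_lower2 simp: ennreal_of_nat_eq_real_of_nat)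
    also have "\<dots> \<le> ?S"
      using not_less_Least[of _ "\<lambda>t. b < W t \<omega>"] by (intro below) (auto simp: n_def not_less)
    finally show ?thesis .
  qed
qed

lemma nn_integral_hitting_time_le:
  assumes [measurable]: "\<And>t. W t \<in> borel_measurable M"
  shows "(\<integral>\<^sup>+\<omega>. hitting_time W b \<omega> \<partial>M) \<le> (\<Sum>t. emeasure M {\<omega> \<in> space M. W t \<omega> \<le> b})"
proof -
  have "(\<integral>\<^sup>+\<omega>. hitting_time W b \<omega> \<partial>M) \<le> (\<integral>\<^sup>+\<omega>. (\<Sum>t. indicator {\<omega> \<in> space M. W t \<omega> \<le> b} \<omega>) \<partial>M)"
    by (intro nn_integral_mono order_trans[OF hitting_time_le_suminf] suminf_le) auto
  also have "\<dots> = (\<Sum>t. emeasure M {\<omega> \<in> space M. W t \<omega> \<le> b})"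
    by (simp add: nn_integral_suminf)
  finally show ?thesis .
qed

lemma suminf_le_of_geometric_tail:
  fixes p :: "nat \<Rightarrow> real"
  assumes "\<And>t. 0 \<le> p t" "\<And>t. p t \<le> 1" "\<And>t. t \<ge> N \<Longrightarrow> p t \<le> q ^ (t - N)"
    and "0 \<le> q" "q < 1"
  shows "(\<Sum>t. ennreal (p t)) \<le> ennreal (real N + 1 / (1 - q))"
proof -
  define h where "h t = (if t < N then 1 else q ^ (t - N))" for t
  have "(\<lambda>i. h (i + N)) sums (1 / (1 - q))"
    using assms by (simp add: h_def geometric_sums)
  moreover have "(\<Sum>t<N. h t) = real N"
    by (simp add: h_def)
  ultimately have "h sums (real N + 1 / (1 - q))"
    by (simp add: sums_iff_shift add.commute)
  moreover have "0 \<le> h t" for t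
    using assms by (simp add: h_def)
  ultimately have "(\<Sum>t. ennreal (h t)) = ennreal (real N + 1 / (1 - q))"
    by (simp add: suminf_ennreal2 sums_iff)
  moreover have "(\<Sum>t. ennreal (p t)) \<le> (\<Sum>t. ennreal (h t))"
    using assms by (intro suminf_le ennreal_leI) (auto simp: h_def)
  ultimately show ?thesis
    by simp
qed

locale neg_moment_process = prob_space M for M :: "'a measure" +
  fixes W :: "nat \<Rightarrow> 'a \<Rightarrow> real" and \<gamma>\<^sub>0 :: real
  assumes W_measurable[measurable]: "\<And>t. W t \<in> borel_measurable M"
    and W_pos: "\<And>t \<omega>. \<omega> \<in> space M \<Longrightarrow> W t \<omega> > 0"
    and \<gamma>\<^sub>0_neg: "\<gamma>\<^sub>0 < 0"
    and neg_moment_integrable: "\<And>t \<gamma>. \<gamma>\<^sub>0 < \<gamma> \<Longrightarrow> \<gamma> < 0 \<Longrightarrow> integrable M (\<lambda>\<omega>. W t \<omega> powr \<gamma>)"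
begin

definition rate_limit :: ereal where
  "rate_limit = (SUP \<gamma>\<in>{\<gamma>\<^sub>0<..<0}. moment_rate M W \<gamma>)"

lemma moment_rate_mono:
  assumes "\<gamma>\<^sub>0 < \<gamma>\<^sub>1" "\<gamma>\<^sub>1 \<le> \<gamma>\<^sub>2" "\<gamma>\<^sub>2 < 0"
  shows "moment_rate M W \<gamma>\<^sub>1 \<le> moment_rate M W \<gamma>\<^sub>2"
proof (cases "\<gamma>\<^sub>1 = \<gamma>\<^sub>2")
  case False
  show ?thesis
    unfolding moment_rate_def
  proof (intro Liminf_mono always_eventually allI)
    fix t
    have "ln (expectation (\<lambda>\<omega>. W t \<omega> powr \<gamma>\<^sub>1)) / \<gamma>\<^sub>1 \<le> ln (expectation (\<lambda>\<omega>. W t \<omega> powr \<gamma>\<^sub>2)) / \<gamma>\<^sub>2"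
      using assms False by (intro ln_neg_moment_div_mono W_pos neg_moment_integrable) auto
    then have "1 / real t * (ln (expectation (\<lambda>\<omega>. W t \<omega> powr \<gamma>\<^sub>1)) / \<gamma>\<^sub>1)
        \<le> 1 / real t * (ln (expectation (\<lambda>\<omega>. W t \<omega> powr \<gamma>\<^sub>2)) / \<gamma>\<^sub>2)"
      by (rule mult_left_mono) simp
    then show "ereal (1 / real t * (1 / \<gamma>\<^sub>1) * ln (expectation (\<lambda>\<omega>. W t \<omega> powr \<gamma>\<^sub>1)))
        \<le> ereal (1 / real t * (1 / \<gamma>\<^sub>2) * ln (expectation (\<lambda>\<omega>. W t \<omega> powr \<gamma>\<^sub>2)))"
      by simp
  qed
qed simp

lemma tendsto_moment_rate: "(moment_rate M W \<longlongrightarrow> rate_limit) (at_left 0)"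
proof (rule order_tendstoI)
  fix y assume "y < rate_limit"
  then obtain \<gamma> where \<gamma>: "\<gamma> \<in> {\<gamma>\<^sub>0<..<0}" "y < moment_rate M W \<gamma>"
    unfolding rate_limit_def less_SUP_iff by blast
  have "eventually (\<lambda>z. z \<in> {\<gamma><..<0}) (at_left (0::real))"
    using \<gamma> by (intro eventually_at_left_real) auto
  then show "eventually (\<lambda>z. y < moment_rate M W z) (at_left 0)"
    by eventually_elim (use \<gamma> moment_rate_mono[of \<gamma>] in \<open>fastforce intro: less_le_trans\<close>)
next
  fix y assume "rate_limit < y"
  have "eventually (\<lambda>z. z \<in> {\<gamma>\<^sub>0<..<0}) (at_left (0::real))"
    using \<gamma>\<^sub>0_neg by (intro eventually_at_left_real) auto
  then show "eventually (\<lambda>z. moment_rate M W z < y) (at_left 0)"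
  proof eventually_elim
    case (elim z)
    then have "moment_rate M W z \<le> rate_limit"
      unfolding rate_limit_def by (rule SUP_upper)
    then show ?case
      using \<open>rate_limit < y\<close> by simp
  qed
qed

lemma neg_moment_le_exp:
  assumes "ereal c < rate_limit"
  obtains \<gamma> T where "\<gamma>\<^sub>0 < \<gamma>" "\<gamma> < 0"
    and "\<And>t. t \<ge> T \<Longrightarrow> expectation (\<lambda>\<omega>. W t \<omega> powr \<gamma>) \<le> exp (\<gamma> * c * real t)"
proof -
  obtain \<gamma> where \<gamma>: "\<gamma>\<^sub>0 < \<gamma>" "\<gamma> < 0" and "ereal c < moment_rate M W \<gamma>"
    using assms unfolding rate_limit_def less_SUP_iff by auto
  then have "eventually (\<lambda>t. c < 1 / real t * (1 / \<gamma>) * ln (expectation (\<lambda>\<omega>. W t \<omega> powr \<gamma>))) sequentially"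
    unfolding moment_rate_def by (auto dest: less_LiminfD)
  then have "eventually (\<lambda>t. expectation (\<lambda>\<omega>. W t \<omega> powr \<gamma>) \<le> exp (\<gamma> * c * real t)) sequentially"
    using eventually_ge_at_top[of "1::nat"]
  proof eventually_elim
    case (elim t)
    have "expectation (\<lambda>\<omega>. W t \<omega> powr \<gamma>) > 0"
      using \<gamma> W_pos by (intro integral_pos_of_pos neg_moment_integrable) (auto simp: less_imp_neq[symmetric])
    moreover have "\<gamma> * real t < 0"
      using elim \<gamma> by (simp add: mult_neg_pos)
    then have "ln (expectation (\<lambda>\<omega>. W t \<omega> powr \<gamma>)) < \<gamma> * c * real t"
      using elim by (simp add: neg_less_divide_eq mult_ac)
    ultimately show ?case
      by (metis exp_less_cancel_iff exp_ln less_imp_le)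
  qed
  then show ?thesis
    using \<gamma> that unfolding eventually_sequentially by blast
qed

lemma prob_le_exp:
  assumes "ereal c < rate_limit"
  obtains \<gamma> T where "\<gamma> < 0"
    and "\<And>t x. t \<ge> T \<Longrightarrow> x > 0 \<Longrightarrow> prob {\<omega> \<in> space M. W t \<omega> \<le> x} \<le> exp (\<gamma> * (c * real t - ln x))"
proof -
  obtain \<gamma> T where \<gamma>: "\<gamma>\<^sub>0 < \<gamma>" "\<gamma> < 0"
    and T: "\<And>t. t \<ge> T \<Longrightarrow> expectation (\<lambda>\<omega>. W t \<omega> powr \<gamma>) \<le> exp (\<gamma> * c * real t)"
    using neg_moment_le_exp[OF assms] by blast
  have "prob {\<omega> \<in> space M. W t \<omega> \<le> x} \<le> exp (\<gamma> * (c * real t - ln x))" if "t \<ge> T" "x > 0" for t x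
  proof -
    have "prob {\<omega> \<in> space M. W t \<omega> \<le> x} \<le> expectation (\<lambda>\<omega>. W t \<omega> powr \<gamma>) / x powr \<gamma>"
      using \<gamma> that by (intro prob_le_neg_moment W_pos neg_moment_integrable) auto
    also have "\<dots> \<le> exp (\<gamma> * c * real t) / exp (\<gamma> * ln x)"
      using that T by (simp add: powr_def[of x] divide_right_mono mult.commute)
    also have "\<dots> = exp (\<gamma> * (c * real t - ln x))"
      by (simp add: exp_diff[symmetric] algebra_simps)
    finally show ?thesis .
  qed
  with \<gamma> that show ?thesis
    by blast
qed

lemma AE_liminf_ge:
  assumes "ereal c < rate_limit"
  shows "AE \<omega> in M. ereal c \<le> liminf (\<lambda>t. ereal (1 / real t * ln (W t \<omega>)))"
proof -
  obtain c' where c': "c < c'" "ereal c' < rate_limit"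
    using ereal_dense2[OF assms] by (metis less_ereal.simps(1))
  obtain \<gamma> T where "\<gamma> < 0"
    and T: "\<And>t x. t \<ge> T \<Longrightarrow> x > 0 \<Longrightarrow> prob {\<omega> \<in> space M. W t \<omega> \<le> x} \<le> exp (\<gamma> * (c' * real t - ln x))"
    using prob_le_exp[OF c'(2)] by blast
  define A where "A t = {\<omega> \<in> space M. W t \<omega> \<le> exp (c * real t)}" for t
  define q where "q = exp (\<gamma> * (c' - c))"
  have "q < 1"
    using \<open>\<gamma> < 0\<close> c' by (simp add: q_def mult_neg_pos)
  have "prob (A t) \<le> q ^ t" if "t \<ge> T" for t
    using T[OF that, of "exp (c * real t)"]
    by (simp add: A_def q_def exp_of_nat_mult[symmetric] algebra_simps)
  then have "summable (\<lambda>t. prob (A t))"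
    using \<open>q < 1\<close> by (intro summable_comparison_test'[where N=T, OF summable_geometric[of q]]) (auto simp: q_def)
  then have "AE \<omega> in M. eventually (\<lambda>t. \<omega> \<in> space M - A t) sequentially"
    by (intro borel_cantelli_AE1) (auto simp: A_def emeasure_eq_measure)
  then show ?thesis
  proof eventually_elim
    case (elim \<omega>)
    then have "eventually (\<lambda>t. ereal c \<le> ereal (1 / real t * ln (W t \<omega>))) sequentially"
      using eventually_ge_at_top[of "1::nat"]
    proof eventually_elim
      case (elim t)
      then have "c * real t < ln (W t \<omega>)"
        using W_pos[of \<omega> t] ln_less_cancel_iff[of "exp (c * real t)" "W t \<omega>"] by (auto simp: A_def)
      then show ?case
        using elim by (simp add: field_simps)
    qed
    then show ?case
      by (rule Liminf_bounded)
  qed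
qed

lemma AE_liminf_ge_rate_limit:
  "AE \<omega> in M. rate_limit \<le> liminf (\<lambda>t. ereal (1 / real t * ln (W t \<omega>)))"
proof -
  have "AE \<omega> in M. \<forall>r::rat. ereal (of_rat r) < rate_limit \<longrightarrow>
      ereal (of_rat r) \<le> liminf (\<lambda>t. ereal (1 / real t * ln (W t \<omega>)))"
    by (subst AE_all_countable) (intro allI AE_impI AE_liminf_ge)
  then show ?thesis
  proof eventually_elim
    case (elim \<omega>)
    show ?case
    proof (rule dense_le)
      fix y assume "y < rate_limit"
      then obtain r :: rat where "y < ereal (of_rat r)" "ereal (of_rat r) < rate_limit"
        using ereal_dense3 by blast
      with elim show "y \<le> liminf (\<lambda>t. ereal (1 / real t * ln (W t \<omega>)))"
        by (meson less_imp_le order_trans)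
    qed
  qed
qed

lemma nn_integral_hitting_time_le_ln:
  assumes "0 < c" "ereal c < rate_limit"
  obtains K where "K \<ge> 0" "\<And>b. (\<integral>\<^sup>+\<omega>. hitting_time W b \<omega> \<partial>M) \<le> ennreal (ln (max b 1) / c + K)"
proof -
  obtain \<gamma> T where "\<gamma> < 0"
    and T: "\<And>t x. t \<ge> T \<Longrightarrow> x > 0 \<Longrightarrow> prob {\<omega> \<in> space M. W t \<omega> \<le> x} \<le> exp (\<gamma> * (c * real t - ln x))"
    using prob_le_exp[OF assms(2)] by blast
  define q where "q = exp (\<gamma> * c)"
  have "q < 1"
    using \<open>\<gamma> < 0\<close> \<open>0 < c\<close> by (simp add: q_def mult_neg_pos)
  have "(\<integral>\<^sup>+\<omega>. hitting_time W b \<omega> \<partial>M) \<le> ennreal (ln (max b 1) / c + (real T + 1 + 1 / (1 - q)))" for b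
  proof -
    define B where "B = max b 1"
    define N where "N = T + nat \<lceil>ln B / c\<rceil>"
    have "ln B \<ge> 0"
      by (simp add: B_def)
    have "ln B / c \<le> real N"
      unfolding N_def by linarith
    then have "ln B \<le> c * real N"
      using \<open>0 < c\<close> by (simp add: pos_divide_le_eq mult.commute)
    have tail: "prob {\<omega> \<in> space M. W t \<omega> \<le> b} \<le> q ^ (t - N)" if "t \<ge> N" for t
    proof -
      have "prob {\<omega> \<in> space M. W t \<omega> \<le> b} \<le> prob {\<omega> \<in> space M. W t \<omega> \<le> B}"
        by (intro finite_measure_mono) (auto simp: B_def)
      also have "\<dots> \<le> exp (\<gamma> * (c * real t - ln B))"
        using that by (intro T) (auto simp: N_def B_def)
      also have "\<dots> \<le> exp (\<gamma> * (c * real (t - N)))"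
        using that \<open>\<gamma> < 0\<close> \<open>ln B \<le> c * real N\<close>
        by (intro exp_mono mult_left_mono_neg) (simp_all add: right_diff_distrib)
      also have "\<dots> = q ^ (t - N)"
        unfolding q_def exp_of_nat_mult[symmetric] by (simp add: mult_ac)
      finally show ?thesis .
    qed
    have "(\<integral>\<^sup>+\<omega>. hitting_time W b \<omega> \<partial>M) \<le> (\<Sum>t. emeasure M {\<omega> \<in> space M. W t \<omega> \<le> b})"
      by (rule nn_integral_hitting_time_le[OF W_measurable])
    also have "\<dots> = (\<Sum>t. ennreal (prob {\<omega> \<in> space M. W t \<omega> \<le> b}))"
      by (simp only: emeasure_eq_measure)
    also have "\<dots> \<le> ennreal (real N + 1 / (1 - q))"
      using tail \<open>q < 1\<close> by (intro suminf_le_of_geometric_tail) (auto simp: q_def)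
    also have "\<dots> \<le> ennreal (ln B / c + (real T + 1 + 1 / (1 - q)))"
      using \<open>ln B \<ge> 0\<close> \<open>0 < c\<close> unfolding N_def by (intro ennreal_leI) simp
    finally show ?thesis
      by (simp add: B_def)
  qed
  moreover have "real T + 1 + 1 / (1 - q) \<ge> 0"
    using \<open>q < 1\<close> by simp
  ultimately show ?thesis
    using that by blast
qed

lemma nn_integral_hitting_time_finite:
  assumes "rate_limit > 0"
  shows "(\<integral>\<^sup>+\<omega>. hitting_time W b \<omega> \<partial>M) < \<infinity>"
proof -
  obtain c where "0 < c" "ereal c < rate_limit"
    using ereal_dense2[OF assms] by (auto simp: zero_ereal_def)
  then obtain K where "(\<integral>\<^sup>+\<omega>. hitting_time W b \<omega> \<partial>M) \<le> ennreal (ln (max b 1) / c + K)"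
    using nn_integral_hitting_time_le_ln[OF \<open>0 < c\<close> \<open>ereal c < rate_limit\<close>] by blast
  then show ?thesis
    by (simp add: le_less_trans)
qed

lemma Limsup_expected_hitting_time_le:
  assumes "0 < c" "ereal c < rate_limit"
  shows "Limsup at_top (\<lambda>b. ereal (enn2real (\<integral>\<^sup>+\<omega>. hitting_time W b \<omega> \<partial>M) / ln b)) \<le> ereal (1 / c)"
proof -
  obtain K where "K \<ge> 0" and K: "\<And>b. (\<integral>\<^sup>+\<omega>. hitting_time W b \<omega> \<partial>M) \<le> ennreal (ln (max b 1) / c + K)"
    using nn_integral_hitting_time_le_ln[OF assms] by blast
  have "eventually (\<lambda>b. ereal (enn2real (\<integral>\<^sup>+\<omega>. hitting_time W b \<omega> \<partial>M) / ln b) \<le> ereal (1 / c + K / ln b)) at_top"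
    using eventually_gt_at_top[of 1]
  proof eventually_elim
    case (elim b)
    then have "ln b > 0"
      by simp
    have "enn2real (\<integral>\<^sup>+\<omega>. hitting_time W b \<omega> \<partial>M) \<le> ln b / c + K"
      using K[of b] elim \<open>0 < c\<close> \<open>K \<ge> 0\<close> by (intro enn2real_leI) simp_all
    then have "enn2real (\<integral>\<^sup>+\<omega>. hitting_time W b \<omega> \<partial>M) / ln b \<le> (ln b / c + K) / ln b"
      using \<open>ln b > 0\<close> by (simp add: divide_right_mono)
    also have "\<dots> = 1 / c + K / ln b"
      using \<open>ln b > 0\<close> by (simp add: field_simps)
    finally show ?case
      by simp
  qed
  then have "Limsup at_top (\<lambda>b. ereal (enn2real (\<integral>\<^sup>+\<omega>. hitting_time W b \<omega> \<partial>M) / ln b))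
      \<le> Limsup at_top (\<lambda>b. ereal (1 / c + K / ln b))"
    by (rule Limsup_mono)
  also have "\<dots> = ereal (1 / c)"
  proof (intro lim_imp_Limsup tendsto_ereal)
    have "((\<lambda>b. K / ln b) \<longlongrightarrow> 0) at_top"
      by (intro tendsto_divide_0[OF tendsto_const] filterlim_at_top_imp_at_infinity ln_at_top)
    then show "((\<lambda>b. 1 / c + K / ln b) \<longlongrightarrow> 1 / c) at_top"
      using tendsto_add[OF tendsto_const, of _ 0 at_top "1 / c"] by simp
  qed simp
  finally show ?thesis .
qed

lemma Limsup_expected_hitting_time_le_inverse:
  assumes "rate_limit > 0"
  shows "Limsup at_top (\<lambda>b. ereal (enn2real (\<integral>\<^sup>+\<omega>. hitting_time W b \<omega> \<partial>M) / ln b)) \<le> 1 / rate_limit"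
proof (rule dense_ge)
  fix y assume y: "1 / rate_limit < y"
  show "Limsup at_top (\<lambda>b. ereal (enn2real (\<integral>\<^sup>+\<omega>. hitting_time W b \<omega> \<partial>M) / ln b)) \<le> y"
  proof (cases y)
    case (real r)
    have "0 < r"
      using assms y real
      by (metis dual_order.strict_trans2 ereal_less(2) less_le_not_le zero_le_divide_ereal zero_less_one_ereal)
    have "ereal (1 / r) < rate_limit"
    proof (cases rate_limit)
      case (real R)
      then have "0 < R" "1 / R < r"
        using assms y \<open>y = ereal r\<close> by (auto simp: one_ereal_def)
      then show ?thesis
        using real \<open>0 < r\<close> by (simp add: field_simps)
    qed (use assms in auto)
    then show ?thesis
      using Limsup_expected_hitting_time_le[of "1 / r"] real \<open>0 < r\<close> by simp
  qed (use y in auto)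
qed

end

theorem mainTheorem9:
  fixes M :: "'a measure" and W :: "nat \<Rightarrow> 'a \<Rightarrow> real" and \<gamma>\<^sub>0 :: real
  assumes "prob_space M"
    and meas: "\<And>t. W t \<in> borel_measurable M"
    and pos: "\<And>t \<omega>. \<omega> \<in> space M \<Longrightarrow> W t \<omega> > 0"
    and "\<gamma>\<^sub>0 < 0"
    and mom: "\<And>t \<gamma>. \<gamma>\<^sub>0 < \<gamma> \<Longrightarrow> \<gamma> < 0 \<Longrightarrow> integrable M (\<lambda>\<omega>. W t \<omega> powr \<gamma>)"
  shows "\<exists>C :: ereal.
           (moment_rate M W \<longlongrightarrow> C) (at_left 0) \<and>
           (AE \<omega> in M. liminf (\<lambda>t. ereal (1 / real t * ln (W t \<omega>))) \<ge> C) \<and>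
           (C > 0 \<longrightarrow>
              (\<forall>b\<ge>0. hitting_time W b \<in> borel_measurable M \<and>
                      (\<integral>\<^sup>+ \<omega>. hitting_time W b \<omega> \<partial>M) < \<infinity>) \<and>
              Limsup at_top (\<lambda>b::real. ereal (enn2real (\<integral>\<^sup>+ \<omega>. hitting_time W b \<omega> \<partial>M) / ln b))
                \<le> 1 / C)"
proof -
  interpret neg_moment_process M W \<gamma>\<^sub>0
    using assms by (simp add: neg_moment_process_def neg_moment_process_axioms_def)
  show ?thesis
  proof (intro exI[of _ rate_limit] conjI impI allI)
    show "(moment_rate M W \<longlongrightarrow> rate_limit) (at_left 0)"
      by (rule tendsto_moment_rate)
    show "AE \<omega> in M. rate_limit \<le> liminf (\<lambda>t. ereal (1 / real t * ln (W t \<omega>)))"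
      by (rule AE_liminf_ge_rate_limit)
  next
    fix b :: real
    assume "rate_limit > 0"
    show "hitting_time W b \<in> borel_measurable M"
      by measurable
    show "(\<integral>\<^sup>+\<omega>. hitting_time W b \<omega> \<partial>M) < \<infinity>"
      using \<open>rate_limit > 0\<close> by (rule nn_integral_hitting_time_finite)
  next
    assume "rate_limit > 0"
    then show "Limsup at_top (\<lambda>b. ereal (enn2real (\<integral>\<^sup>+\<omega>. hitting_time W b \<omega> \<partial>M) / ln b)) \<le> 1 / rate_limit"
      by (rule Limsup_expected_hitting_time_le_inverse)
  qed
qed

end
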